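(* Let $\Omega\subseteq\mathsf X$ be open, $p\in[1,\infty)$, and $\rho_\bullet=(\rho_\delta)_{\delta\in(0,1)}\subseteq\mathfrak M_+(\mathsf X\times\mathsf X)$. Suppose there is a family $(\varrho^+_\delta)_{\delta\in(0,1)}$ of Lebesgue measurable functions $(0,\infty)\to[0,+\infty]$ such that: (i) $\lim_{r\searrow0}\limsup_{\delta\searrow0}\int_{(r,+\infty)}\frac{\varrho^+_\delta(t)}{t^{p+1}}\,\mathrm dt=0$; (ii) for every $\delta\in(0,1)$, $\rho_\delta(x,x')\le\frac{\varrho^+_\delta(\mathsf d(x,x'))}{\mathfrak m(\mathrm B(x,4\mathsf d(x,x')))}$ for $(\mathfrak m\otimes\mathfrak m)$-a.e. $(x,x')\in\Omega\times\Omega$ with $x\ne x'$; (iii) there is $\bar r>0$ such that for every $\delta\in(0,1)$ and every $k\in\mathbb Z$, $\varrho^+_\delta$ is constant on $(2^k\bar r,2^{k+1}\bar r]$. Then $\rho_\bullet$ satisfies the $p$-decay condition for $\Omega$, i.e. \[ \lim_{r\searrow0}\limsup_{\delta\searrow0}\operatorname*{ess\,sup}_{x\in\Omega}\int_{\Omega\cap\{x':\mathsf d(x,x')>r\}}\frac{\rho_\delta(x,x')+\rho_\delta(x',x)}{\mathsf d(x,x')^p}\,\mathrm d\mathfrak m(x')=0. \]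
   Context: $(\mathsf X,\mathsf d)$ is a locally complete separable metric space of positive diameter with a locally finite Borel outer measure $\mathfrak m$, $\mathfrak m(\mathsf X)>0$. Conventions $0\cdot(+\infty)=0/0=0$. Closed balls $\mathrm B(x,r)=\{x':\mathsf d(x,x')\le r\}$. Essential sup w.r.t. $\mathfrak m$. $\mathfrak M_+(\mathsf X\times\mathsf X)$: $(\mathfrak m\otimes\mathfrak m)$-measurable functions into $[0,+\infty]$. *)

theory Defs
  imports "HOL-Analysis.Analysis"
begin

definition standing_mms :: "('a::{metric_space,second_countable_topology}) measure \<Rightarrow> bool" where
  "standing_mms M \<longleftrightarrow>
     sets M = sets borel \<and>
     (\<forall>x::'a. \<exists>e>0. complete (cball x e)) \<and>
     (\<exists>x y::'a. x \<noteq> y) \<and>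
     (\<forall>x::'a. \<exists>e>0. emeasure M (ball x e) < \<infinity>) \<and>
     emeasure M (space M) > 0"

definition ess_sup_on :: "'a measure \<Rightarrow> 'a set \<Rightarrow> ('a \<Rightarrow> ennreal) \<Rightarrow> ennreal" where
  "ess_sup_on M \<Omega> f = Inf {c. AE x in M. x \<in> \<Omega> \<longrightarrow> f x \<le> c}"

definition p_decay :: "('a::metric_space) measure \<Rightarrow> 'a set \<Rightarrow> real \<Rightarrow> (real \<Rightarrow> 'a \<Rightarrow> 'a \<Rightarrow> ennreal) \<Rightarrow> bool" where
  "p_decay M \<Omega> p \<rho> \<longleftrightarrow>
     ((\<lambda>r. Limsup (at_right 0) (\<lambda>\<delta>.
        ess_sup_on M \<Omega> (\<lambda>x. \<integral>\<^sup>+ x'. indicator (\<Omega> \<inter> {x'. dist x x' > r}) x' *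
            ((\<rho> \<delta> x x' + \<rho> \<delta> x' x) / ennreal (dist x x' powr p)) \<partial>(completion M))))
      \<longlongrightarrow> 0) (at_right 0)"

end

theory Submission
  imports Defs
begin

(*
  Fix x and r, and pick a dyadic radius R = 2^k * rb with r/2 < R <= r. Cut the region
  {x'. d(x,x') > r} into the annuli A_n = {x'. R 2^n < d(x,x') <= R 2^(n+1)}. On A_n the
  profile rho+ is constant, and both B(x, 4 d(x,x')) and B(x', 4 d(x,x')) contain
  B(x, R 2^(n+1)), a ball which also contains A_n. So the contribution of A_n is at most
  2 rho+(R 2^(n+1)) / (R 2^n)^p, which is 2^(p+2) times the integral of rho+(t) / t^(p+1)
  over (R 2^n, R 2^(n+1)]. Summing over n bounds the integral in the p-decay condition by
  2^(p+2) times the tail integral of rho+(t) / t^(p+1) over (r/2, oo), uniformly in x,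
  and hypothesis (i) finishes the proof.
*)

lemma divide_left_mono_ennreal:
  fixes a b c :: ennreal
  assumes "a \<le> b"
  shows "c / b \<le> c / a"
proof (cases "a = 0")
  case False
  then show ?thesis
    using assms by (cases a b c rule: ennreal3_cases)
      (auto simp: divide_ennreal ennreal_top_divide frac_le top_unique)
qed simp

lemma mult_divide_le_ennreal:
  fixes a b c :: ennreal
  assumes "a \<le> b"
  shows "a * (c / b) \<le> c"
  by (metis assms dense_le divide_le_posI_ennreal ennreal_times_divide le_zero_eq
      mult_eq_0_iff mult_right_mono not_less_iff_gr_or_eq not_less_zero)

definition dyadic_shell :: "real \<Rightarrow> nat \<Rightarrow> real set" where
  "dyadic_shell R n = {R * 2 ^ n <.. R * 2 ^ Suc n}"

lemma disjoint_family_dyadic_shell: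
  assumes "R > 0"
  shows "disjoint_family (dyadic_shell R)"
  unfolding disjoint_family_on_def
proof (intro ballI impI)
  fix m n :: nat
  assume "m \<noteq> n"
  have "R * 2 ^ Suc i \<le> R * 2 ^ j" if "i < j" for i j :: nat
    using that assms by (intro mult_left_mono power_increasing) auto
  from this[of m n] this[of n m] \<open>m \<noteq> n\<close>
  show "dyadic_shell R m \<inter> dyadic_shell R n = {}"
    unfolding dyadic_shell_def by (cases "m < n") auto
qed

lemma ex_dyadic_shell:
  assumes "R > 0" and "R < t"
  shows "\<exists>n. t \<in> dyadic_shell R n"
proof -
  obtain N where "t / R < 2 ^ N"
    using real_arch_pow[of 2 "t / R"] by auto
  then have ex: "\<exists>N. t \<le> R * 2 ^ N"
    using assms by (auto simp: field_simps intro!: exI[of _ N])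
  define N where "N = (LEAST N. t \<le> R * 2 ^ N)"
  have N: "t \<le> R * 2 ^ N"
    unfolding N_def by (rule LeastI_ex[OF ex])
  then obtain n where n: "N = Suc n"
    using assms by (cases N) auto
  have "\<not> t \<le> R * 2 ^ n"
    using not_less_Least[of n "\<lambda>N. t \<le> R * 2 ^ N"] unfolding N_def[symmetric] n by auto
  with N n show ?thesis
    unfolding dyadic_shell_def by (auto simp: not_le intro!: exI[of _ n])
qed

lemma dyadic_shell_subset_greaterThan: "R > 0 \<Longrightarrow> dyadic_shell R n \<subseteq> {R<..}"
  unfolding dyadic_shell_def by (auto intro: order.strict_trans1[rotated])

lemma dyadic_shell_powr:
  fixes k :: int
  shows "dyadic_shell (2 powr k * b) n = {2 powr (k + int n) * b <.. 2 powr (real_of_int (k + int n) + 1) * b}"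
proof -
  have shift: "2 powr k * b * 2 ^ m = 2 powr (k + int m) * b" for m
    by (simp add: powr_add powr_realpow)
  have "real_of_int (k + int n) + 1 = real_of_int (k + int (Suc n))"
    by simp
  then show ?thesis
    unfolding dyadic_shell_def by (simp only: shift)
qed

lemma const_on_dyadic_shell:
  fixes g :: "real \<Rightarrow> 'b" and k :: int
  assumes const: "\<forall>j::int. \<exists>c. \<forall>t\<in>{2 powr j * b <.. 2 powr (real_of_int j + 1) * b}. g t = c"
    and t: "t \<in> dyadic_shell (2 powr k * b) n"
  shows "g t = g (2 powr k * b * 2 ^ Suc n)"
proof -
  obtain c where c: "\<forall>t\<in>dyadic_shell (2 powr k * b) n. g t = c"
    using const[rule_format, of "k + int n"] unfolding dyadic_shell_powr by auto
  have "2 powr k * b * 2 ^ Suc n \<in> dyadic_shell (2 powr k * b) n"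
    using t unfolding dyadic_shell_def greaterThanAtMost_iff by (meson less_le_trans order_refl)
  with c t show ?thesis by simp
qed

lemma ex_dyadic_multiple_between:
  fixes r b :: real
  assumes "r > 0" and "b > 0"
  shows "\<exists>k::int. r / 2 < 2 powr k * b \<and> 2 powr k * b \<le> r"
proof -
  define k where "k = \<lfloor>log 2 (r / b)\<rfloor>"
  have "2 powr k \<le> 2 powr (log 2 (r / b))"
    unfolding k_def by (intro powr_mono) auto
  also have "\<dots> = r / b"
    using assms by simp
  finally have le: "2 powr k * b \<le> r"
    using assms by (simp add: field_simps)
  have "r / b = 2 powr (log 2 (r / b))"
    using assms by simp
  also have "\<dots> < 2 powr (k + 1)"
    unfolding k_def by (intro powr_less_mono) linarith+
  also have "\<dots> = 2 * 2 powr k"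
    by (simp add: powr_add)
  finally have "r / 2 < 2 powr k * b"
    using assms by (simp add: field_simps)
  with le show ?thesis by blast
qed

lemma ennreal_divide_powr_rescale:
  fixes c :: ennreal and s p :: real
  assumes s: "s > 0"
  shows "c / ennreal (s powr p)
    = ennreal (2 powr (p + 1)) * (c / ennreal ((2 * s) powr (p + 1)) * ennreal s)"
proof -
  have divide_eq: "c / ennreal a = c * ennreal (1 / a)" if "a > 0" for a c
    using that by (simp add: divide_ennreal_def inverse_ennreal divide_inverse)
  have "1 / s powr p = 2 powr (p + 1) * ((1 / (2 * s) powr (p + 1)) * s)"
    using s by (simp add: powr_mult powr_add field_simps)
  then have "ennreal (1 / s powr p)
      = ennreal (2 powr (p + 1)) * (ennreal (1 / (2 * s) powr (p + 1)) * ennreal s)"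
    using s by (simp only: ennreal_mult mult_nonneg_nonneg divide_nonneg_nonneg
      powr_ge_zero zero_le_one less_imp_le)
  then show ?thesis
    using s by (simp add: divide_eq mult_ac)
qed

lemma dyadic_sum_le_nn_integral:
  fixes g :: "real \<Rightarrow> ennreal"
  assumes R: "R > 0" and p: "p \<ge> 0"
    and const: "\<And>n t. t \<in> dyadic_shell R n \<Longrightarrow> g t = g (R * 2 ^ Suc n)"
  shows "(\<Sum>n. g (R * 2 ^ Suc n) / ennreal ((R * 2 ^ n) powr p))
    \<le> ennreal (2 powr (p + 1)) * (\<integral>\<^sup>+ t\<in>{R<..}. g t / ennreal (t powr (p + 1)) \<partial>lebesgue)"
proof -
  define e where "e n = g (R * 2 ^ Suc n) / ennreal ((R * 2 ^ Suc n) powr (p + 1))" for n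
  have "g (R * 2 ^ Suc n) / ennreal ((R * 2 ^ n) powr p)
      = ennreal (2 powr (p + 1)) * (e n * emeasure lborel (dyadic_shell R n))" for n
  proof -
    have pos: "R * 2 ^ n > 0" and double: "2 * (R * 2 ^ n) = R * 2 ^ Suc n"
      and length: "emeasure lborel (dyadic_shell R n) = ennreal (R * 2 ^ n)"
      using R by (simp_all add: dyadic_shell_def)
    show ?thesis
      using ennreal_divide_powr_rescale[OF pos, of "g (R * 2 ^ Suc n)" p]
      unfolding e_def double length .
  qed
  then have "(\<Sum>n. g (R * 2 ^ Suc n) / ennreal ((R * 2 ^ n) powr p))
      = ennreal (2 powr (p + 1)) * (\<Sum>n. e n * emeasure lborel (dyadic_shell R n))"
    by (simp only: ennreal_suminf_cmult)
  also have "(\<Sum>n. e n * emeasure lborel (dyadic_shell R n))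
      = (\<integral>\<^sup>+ t. (\<Sum>n. e n * indicator (dyadic_shell R n) t) \<partial>lebesgue)"
    by (simp add: nn_integral_suminf nn_integral_completion nn_integral_cmult_indicator dyadic_shell_def)
  also have "\<dots> \<le> (\<integral>\<^sup>+ t\<in>{R<..}. g t / ennreal (t powr (p + 1)) \<partial>lebesgue)"
  proof (rule nn_integral_mono)
    fix t
    show "(\<Sum>n. e n * indicator (dyadic_shell R n) t)
        \<le> g t / ennreal (t powr (p + 1)) * indicator {R<..} t"
    proof (cases "\<exists>n. t \<in> dyadic_shell R n")
      case True
      then obtain n where n: "t \<in> dyadic_shell R n" ..
      have "e n \<le> g t / ennreal (t powr (p + 1))"
        unfolding e_def const[OF n] using n R p
        by (intro divide_left_mono_ennreal ennreal_leI powr_mono2) (auto simp: dyadic_shell_def)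
      moreover have "t \<in> {R<..}"
        using n dyadic_shell_subset_greaterThan[OF R] by blast
      ultimately show ?thesis
        by (simp add: suminf_cmult_indicator[OF disjoint_family_dyadic_shell[OF R] n])
    qed simp
  qed
  finally show ?thesis
    by (simp add: mult_left_mono)
qed

lemma cball_dyadic_shell_subset:
  assumes "dist x x' \<in> dyadic_shell R n"
  shows "cball x (R * 2 ^ Suc n) \<subseteq> cball x (4 * dist x x') \<inter> cball x' (4 * dist x x')"
proof
  fix y
  assume "y \<in> cball x (R * 2 ^ Suc n)"
  then have "dist x y \<le> 2 * dist x x'"
    using assms by (simp add: dyadic_shell_def)
  moreover have "dist x' y \<le> dist x x' + dist x y"
    by (metis dist_commute dist_triangle)
  ultimately have "dist x y \<le> 4 * dist x x'" "dist x' y \<le> 4 * dist x x'"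
    using zero_le_dist[of x x'] by linarith+
  then show "y \<in> cball x (4 * dist x x') \<inter> cball x' (4 * dist x x')"
    by simp
qed

lemma kernel_sum_le_on_dyadic_shell:
  fixes M :: "'a::metric_space measure"
  assumes sets: "sets M = sets borel" and R: "R > 0" and p: "p \<ge> 0"
    and const: "\<And>t. t \<in> dyadic_shell R n \<Longrightarrow> g t = g (R * 2 ^ Suc n)"
    and shell: "dist x x' \<in> dyadic_shell R n"
    and u: "u \<le> g (dist x x') / emeasure M (cball x (4 * dist x x'))"
    and v: "v \<le> g (dist x x') / emeasure M (cball x' (4 * dist x x'))"
  shows "(u + v) / ennreal (dist x x' powr p)
    \<le> 2 * g (R * 2 ^ Suc n) / ennreal ((R * 2 ^ n) powr p) / emeasure M (cball x (R * 2 ^ Suc n))"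
proof -
  let ?B = "emeasure M (cball x (R * 2 ^ Suc n))"
  have B_le: "?B \<le> emeasure M (cball x (4 * dist x x'))" "?B \<le> emeasure M (cball x' (4 * dist x x'))"
    using cball_dyadic_shell_subset[OF shell] sets by (auto intro!: emeasure_mono)
  have "u \<le> g (R * 2 ^ Suc n) / ?B" "v \<le> g (R * 2 ^ Suc n) / ?B"
    using order_trans[OF u divide_left_mono_ennreal[OF B_le(1)]]
      order_trans[OF v divide_left_mono_ennreal[OF B_le(2)]]
    unfolding const[OF shell] by simp_all
  then have "(u + v) / ennreal (dist x x' powr p)
      \<le> 2 * (g (R * 2 ^ Suc n) / ?B) / ennreal (dist x x' powr p)"
    unfolding mult_2 by (intro divide_right_mono_ennreal add_mono)
  also have "\<dots> \<le> 2 * (g (R * 2 ^ Suc n) / ?B) / ennreal ((R * 2 ^ n) powr p)"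
    using shell R p
    by (intro divide_left_mono_ennreal ennreal_leI powr_mono2) (auto simp: dyadic_shell_def)
  also have "\<dots> = 2 * g (R * 2 ^ Suc n) / ennreal ((R * 2 ^ n) powr p) / ?B"
    unfolding divide_ennreal_def by (simp only: mult_ac)
  finally show ?thesis .
qed

lemma nn_integral_le_dyadic_annuli_sum:
  fixes M :: "'a::metric_space measure" and f :: "'a \<Rightarrow> ennreal"
  assumes sets: "sets M = sets borel"
    and dominated: "AE y in M. f y \<le> (\<Sum>n. a n / emeasure M (cball x (R * 2 ^ Suc n)) *
      indicator {y. dist x y \<in> dyadic_shell R n} y)"
  shows "(\<integral>\<^sup>+ y. f y \<partial>completion M) \<le> (\<Sum>n. a n)"
proof -
  define A where "A n = {y. dist x y \<in> dyadic_shell R n}" for n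
  define B where "B n = emeasure M (cball x (R * 2 ^ Suc n))" for n
  have "dist x \<in> borel_measurable borel"
    by (intro borel_measurable_continuous_onI continuous_on_dist continuous_on_const continuous_on_id)
  from measurable_sets[OF this, of "dyadic_shell R n" for n]
  have A_sets: "A n \<in> sets M" for n
    unfolding A_def sets by (simp add: vimage_def dyadic_shell_def)
  have "(\<integral>\<^sup>+ y. f y \<partial>completion M) \<le> (\<integral>\<^sup>+ y. (\<Sum>n. a n / B n * indicator (A n) y) \<partial>M)"
    unfolding nn_integral_completion[symmetric, of M] using dominated
    by (intro nn_integral_mono_AE AE_completion) (simp add: A_def B_def)
  also have "\<dots> = (\<Sum>n. a n / B n * emeasure M (A n))"
    using A_sets by (simp add: nn_integral_suminf nn_integral_cmult_indicator)
  also have "\<dots> \<le> (\<Sum>n. a n)"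
  proof (intro suminf_le summableI)
    fix n
    have "A n \<subseteq> cball x (R * 2 ^ Suc n)"
      unfolding A_def dyadic_shell_def by auto
    then have "emeasure M (A n) \<le> B n"
      unfolding B_def using sets by (intro emeasure_mono) auto
    then show "a n / B n * emeasure M (A n) \<le> a n"
      by (subst mult.commute) (rule mult_divide_le_ennreal)
  qed
  finally show ?thesis .
qed

lemma nn_integral_far_kernel_le_dyadic_sum:
  fixes M :: "'a::metric_space measure" and \<rho> :: "'a \<Rightarrow> 'a \<Rightarrow> ennreal" and g :: "real \<Rightarrow> ennreal"
  assumes sets: "sets M = sets borel" and R: "0 < R" "R \<le> r" and p: "p \<ge> 0"
    and const: "\<And>n t. t \<in> dyadic_shell R n \<Longrightarrow> g t = g (R * 2 ^ Suc n)"
    and ae: "AE x' in M. x' \<in> \<Omega> \<and> x' \<noteq> x \<longrightarrow>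
      \<rho> x x' \<le> g (dist x x') / emeasure M (cball x (4 * dist x x')) \<and>
      \<rho> x' x \<le> g (dist x x') / emeasure M (cball x' (4 * dist x x'))"
  shows "(\<integral>\<^sup>+ x'. indicator (\<Omega> \<inter> {x'. dist x x' > r}) x' *
      ((\<rho> x x' + \<rho> x' x) / ennreal (dist x x' powr p)) \<partial>completion M)
    \<le> 2 * (\<Sum>n. g (R * 2 ^ Suc n) / ennreal ((R * 2 ^ n) powr p))"
proof -
  define A where "A n = {x'. dist x x' \<in> dyadic_shell R n}" for n
  define a where "a n = 2 * g (R * 2 ^ Suc n) / ennreal ((R * 2 ^ n) powr p)" for n
  have A_disjoint: "disjoint_family A"
    using disjoint_family_dyadic_shell[OF R(1)] unfolding A_def disjoint_family_on_def by auto
  have "AE x' in M. indicator (\<Omega> \<inter> {x'. dist x x' > r}) x' *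
      ((\<rho> x x' + \<rho> x' x) / ennreal (dist x x' powr p))
    \<le> (\<Sum>n. a n / emeasure M (cball x (R * 2 ^ Suc n)) * indicator (A n) x')"
    using ae
  proof eventually_elim
    case (elim x')
    show ?case
    proof (cases "x' \<in> \<Omega> \<and> r < dist x x'")
      case True
      then obtain n where n: "x' \<in> A n"
        using ex_dyadic_shell[OF R(1)] R(2) unfolding A_def by fastforce
      then have "(\<rho> x x' + \<rho> x' x) / ennreal (dist x x' powr p)
          \<le> a n / emeasure M (cball x (R * 2 ^ Suc n))"
        using elim True R unfolding A_def a_def
        by (intro kernel_sum_le_on_dyadic_shell[where g = g, OF sets R(1) p const]) auto
      with True show ?thesis
        by (simp add: suminf_cmult_indicator[OF A_disjoint n])
    qed simp
  qed
  then have "(\<integral>\<^sup>+ x'. indicator (\<Omega> \<inter> {x'. dist x x' > r}) x' *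
      ((\<rho> x x' + \<rho> x' x) / ennreal (dist x x' powr p)) \<partial>completion M) \<le> (\<Sum>n. a n)"
    unfolding A_def by (rule nn_integral_le_dyadic_annuli_sum[OF sets])
  then show ?thesis
    by (simp add: a_def ennreal_times_divide[symmetric])
qed

lemma nn_integral_far_kernel_le_tail_integral:
  fixes M :: "'a::metric_space measure" and \<rho> :: "'a \<Rightarrow> 'a \<Rightarrow> ennreal" and g :: "real \<Rightarrow> ennreal"
  assumes sets: "sets M = sets borel" and r: "r > 0" and p: "p \<ge> 0" and b: "b > 0"
    and const: "\<forall>k::int. \<exists>c. \<forall>t\<in>{2 powr k * b <.. 2 powr (real_of_int k + 1) * b}. g t = c"
    and ae: "AE x' in M. x' \<in> \<Omega> \<and> x' \<noteq> x \<longrightarrow>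
      \<rho> x x' \<le> g (dist x x') / emeasure M (cball x (4 * dist x x')) \<and>
      \<rho> x' x \<le> g (dist x x') / emeasure M (cball x' (4 * dist x x'))"
  shows "(\<integral>\<^sup>+ x'. indicator (\<Omega> \<inter> {x'. dist x x' > r}) x' *
      ((\<rho> x x' + \<rho> x' x) / ennreal (dist x x' powr p)) \<partial>completion M)
    \<le> 2 * ennreal (2 powr (p + 1)) *
      (\<integral>\<^sup>+ t\<in>{r / 2<..}. g t / ennreal (t powr (p + 1)) \<partial>lebesgue)"
proof -
  obtain k :: int where k: "r / 2 < 2 powr k * b" "2 powr k * b \<le> r"
    using ex_dyadic_multiple_between[OF r b] by blast
  define R where "R = 2 powr k * b"
  have R: "0 < R" "R \<le> r"
    using b k by (simp_all add: R_def)
  have shell_const: "g t = g (R * 2 ^ Suc n)" if "t \<in> dyadic_shell R n" for n t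
    using const_on_dyadic_shell[OF const] that unfolding R_def .
  have "(\<integral>\<^sup>+ x'. indicator (\<Omega> \<inter> {x'. dist x x' > r}) x' *
      ((\<rho> x x' + \<rho> x' x) / ennreal (dist x x' powr p)) \<partial>completion M)
      \<le> 2 * (\<Sum>n. g (R * 2 ^ Suc n) / ennreal ((R * 2 ^ n) powr p))"
    by (rule nn_integral_far_kernel_le_dyadic_sum[OF sets R p shell_const ae])
  also have "\<dots> \<le> 2 * (ennreal (2 powr (p + 1)) *
      (\<integral>\<^sup>+ t\<in>{R<..}. g t / ennreal (t powr (p + 1)) \<partial>lebesgue))"
    by (intro mult_left_mono dyadic_sum_le_nn_integral[where g = g, OF R(1) p shell_const]) auto
  also have "\<dots> \<le> 2 * (ennreal (2 powr (p + 1)) *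
      (\<integral>\<^sup>+ t\<in>{r / 2<..}. g t / ennreal (t powr (p + 1)) \<partial>lebesgue))"
    using k unfolding R_def
    by (intro mult_left_mono nn_integral_mono) (auto simp: indicator_def)
  finally show ?thesis
    by (simp add: mult.assoc)
qed

lemma sigma_finite_measure_locally_finite:
  fixes M :: "'a::second_countable_topology measure"
  assumes sets: "sets M = sets borel"
    and finite: "\<And>x. \<exists>U. open U \<and> x \<in> U \<and> emeasure M U < \<infinity>"
  shows "sigma_finite_measure M"
proof -
  let ?\<U> = "{U. open U \<and> emeasure M U < \<infinity>}"
  obtain \<U>' where \<U>': "\<U>' \<subseteq> ?\<U>" "countable \<U>'" "\<Union>\<U>' = \<Union>?\<U>"
    by (rule Lindelof[of ?\<U>]) simp
  have "\<Union>?\<U> = space M"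
    using finite sets_eq_imp_space_eq[OF sets] by auto
  show ?thesis
  proof (rule sigma_finite_measure.intro, intro exI conjI)
    show "countable \<U>'" "\<Union>\<U>' = space M"
      using \<U>' \<open>\<Union>?\<U> = space M\<close> by simp_all
    show "\<U>' \<subseteq> sets M" "\<forall>U\<in>\<U>'. emeasure M U \<noteq> \<infinity>"
      using \<U>'(1) sets by auto
  qed
qed

lemma AE_pair_symmetrize:
  assumes "sigma_finite_measure M" and "AE z in M \<Otimes>\<^sub>M M. P (fst z) (snd z)"
  shows "AE x in M. AE y in M. P x y \<and> P y x"
proof -
  interpret pair_sigma_finite M M
    using assms(1) by (simp add: pair_sigma_finite_def)
  have "AE z in distr (M \<Otimes>\<^sub>M M) (M \<Otimes>\<^sub>M M) (\<lambda>(x, y). (y, x)). P (fst z) (snd z)"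
    unfolding distr_pair_swap[symmetric] by (rule assms(2))
  then have "AE z in M \<Otimes>\<^sub>M M. P (snd z) (fst z)"
    by (auto dest: AE_distrD[OF measurable_pair_swap'] simp: split_beta)
  with assms(2) have "AE z in M \<Otimes>\<^sub>M M. P (fst z) (snd z) \<and> P (snd z) (fst z)"
    by eventually_elim auto
  then show ?thesis
    using AE_pair by fastforce
qed

lemma ess_sup_on_le:
  assumes "AE x in M. x \<in> \<Omega> \<longrightarrow> f x \<le> c"
  shows "ess_sup_on M \<Omega> f \<le> c"
  using assms unfolding ess_sup_on_def by (intro Inf_lower) simp

lemma ess_sup_far_kernel_le_tail_integral:
  fixes M :: "'a::metric_space measure"
    and \<rho> :: "'a \<Rightarrow> 'a \<Rightarrow> ennreal" and g :: "real \<Rightarrow> ennreal"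
  assumes sets: "sets M = sets borel" and "sigma_finite_measure M"
    and r: "r > 0" and p: "p \<ge> 0" and b: "b > 0"
    and const: "\<forall>k::int. \<exists>c. \<forall>t\<in>{2 powr k * b <.. 2 powr (real_of_int k + 1) * b}. g t = c"
    and ae: "AE z in M \<Otimes>\<^sub>M M. fst z \<in> \<Omega> \<and> snd z \<in> \<Omega> \<and> fst z \<noteq> snd z \<longrightarrow>
      \<rho> (fst z) (snd z) \<le> g (dist (fst z) (snd z)) / emeasure M (cball (fst z) (4 * dist (fst z) (snd z)))"
  shows "ess_sup_on M \<Omega> (\<lambda>x. \<integral>\<^sup>+ x'. indicator (\<Omega> \<inter> {x'. dist x x' > r}) x' *
      ((\<rho> x x' + \<rho> x' x) / ennreal (dist x x' powr p)) \<partial>completion M)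
    \<le> 2 * ennreal (2 powr (p + 1)) *
      (\<integral>\<^sup>+ t\<in>{r / 2<..}. g t / ennreal (t powr (p + 1)) \<partial>lebesgue)"
proof -
  define P where "P x x' \<longleftrightarrow> (x \<in> \<Omega> \<and> x' \<in> \<Omega> \<and> x \<noteq> x' \<longrightarrow>
    \<rho> x x' \<le> g (dist x x') / emeasure M (cball x (4 * dist x x')))" for x x'
  have "AE x in M. AE x' in M. P x x' \<and> P x' x"
    by (intro AE_pair_symmetrize \<open>sigma_finite_measure M\<close>) (use ae in \<open>simp add: P_def\<close>)
  then show ?thesis
  proof (intro ess_sup_on_le, eventually_elim)
    case (elim x)
    have "AE x' in M. x' \<in> \<Omega> \<and> x' \<noteq> x \<longrightarrow>
        \<rho> x x' \<le> g (dist x x') / emeasure M (cball x (4 * dist x x')) \<and>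
        \<rho> x' x \<le> g (dist x x') / emeasure M (cball x' (4 * dist x x'))" if "x \<in> \<Omega>"
      using elim by eventually_elim (use that in \<open>auto simp: P_def dist_commute\<close>)
    then show ?case
      using nn_integral_far_kernel_le_tail_integral[OF sets r p b const] by blast
  qed
qed

lemma tendsto_Limsup_at_right_0_dominated:
  fixes F G :: "real \<Rightarrow> real \<Rightarrow> ennreal"
  assumes bound: "\<And>r \<delta>. 0 < r \<Longrightarrow> \<delta> \<in> {0<..<1} \<Longrightarrow> F r \<delta> \<le> K * G (r / c) \<delta>"
    and G: "((\<lambda>r. Limsup (at_right 0) (G r)) \<longlongrightarrow> 0) (at_right 0)"
    and K: "K < \<infinity>" and c: "c > 0"
  shows "((\<lambda>r. Limsup (at_right 0) (F r)) \<longlongrightarrow> 0) (at_right 0)"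
proof -
  have small: "\<forall>\<^sub>F \<delta> in at_right (0::real). \<delta> \<in> {0<..<1}"
    unfolding eventually_at_right_field by (intro exI[of _ 1]) auto
  have "Limsup (at_right 0) (F r) \<le> K * Limsup (at_right 0) (G (r / c))" if "r > 0" for r
  proof -
    have "Limsup (at_right 0) (F r) \<le> Limsup (at_right 0) (\<lambda>\<delta>. K * G (r / c) \<delta>)"
      using small by (intro Limsup_mono) (auto elim!: eventually_mono intro: bound that)
    also have "\<dots> = K * Limsup (at_right 0) (G (r / c))"
      using K by (intro Limsup_compose_continuous_mono)
        (auto intro!: ennreal_continuous_on_cmult continuous_on_id simp: mono_def mult_left_mono)
    finally show ?thesis .
  qed
  then have upper: "\<forall>\<^sub>F r in at_right 0.
      Limsup (at_right 0) (F r) \<le> K * Limsup (at_right 0) (G (r / c))"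
    unfolding eventually_at_right_field by (intro exI[of _ 1]) auto
  have "filterlim (\<lambda>r. r / c) (at_right 0) (at_right (0::real))"
    using c by (intro tendsto_imp_filterlim_at_right tendsto_eq_intros)
      (auto simp: eventually_at_right_field intro: exI[of _ 1])
  then have "((\<lambda>r. Limsup (at_right 0) (G (r / c))) \<longlongrightarrow> 0) (at_right 0)"
    using filterlim_compose[OF G] by blast
  from tendsto_mult_ennreal[OF tendsto_const[of K] this] K
  have lim: "((\<lambda>r. K * Limsup (at_right 0) (G (r / c))) \<longlongrightarrow> 0) (at_right 0)"
    by simp
  show ?thesis
    by (rule tendsto_sandwich[OF _ upper tendsto_const lim]) simp
qed

theorem proposition3p14:
  fixes M :: "('a::{metric_space,second_countable_topology}) measure"
    and \<Omega> :: "'a set" and p :: real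
    and \<rho> :: "real \<Rightarrow> 'a \<Rightarrow> 'a \<Rightarrow> ennreal"
    and \<rho>p :: "real \<Rightarrow> real \<Rightarrow> ennreal"
  assumes "standing_mms M"
    and "open \<Omega>"
    and "p \<ge> 1"
    and "\<forall>\<delta>\<in>{0<..<1}. (\<lambda>(x, x'). \<rho> \<delta> x x') \<in> borel_measurable (completion (M \<Otimes>\<^sub>M M))"
    and "\<forall>\<delta>\<in>{0<..<1}. \<rho>p \<delta> \<in> borel_measurable (restrict_space lebesgue {0<..})"
    and "((\<lambda>r. Limsup (at_right 0) (\<lambda>\<delta>.
            \<integral>\<^sup>+ t\<in>{r<..}. \<rho>p \<delta> t / ennreal (t powr (p + 1)) \<partial>lebesgue)) \<longlongrightarrow> 0) (at_right 0)"
    and "\<forall>\<delta>\<in>{0<..<1}. AE z in M \<Otimes>\<^sub>M M. fst z \<in> \<Omega> \<and> snd z \<in> \<Omega> \<and> fst z \<noteq> snd z \<longrightarrow>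
            \<rho> \<delta> (fst z) (snd z) \<le>
              \<rho>p \<delta> (dist (fst z) (snd z)) / emeasure M (cball (fst z) (4 * dist (fst z) (snd z)))"
    and "\<exists>rb>0. \<forall>\<delta>\<in>{0<..<1}. \<forall>k::int. \<exists>c. \<forall>t\<in>{2 powr k * rb <.. 2 powr (k + 1) * rb}. \<rho>p \<delta> t = c"
  shows "p_decay M \<Omega> p \<rho>"
proof -
  obtain b where b: "b > 0"
    and const: "\<forall>\<delta>\<in>{0<..<1}. \<forall>k::int. \<exists>c. \<forall>t\<in>{2 powr k * b <.. 2 powr (k + 1) * b}. \<rho>p \<delta> t = c"
    using assms(8) by blast
  have sets: "sets M = sets borel"
    using assms(1) unfolding standing_mms_def by blast
  have "sigma_finite_measure M"
    using assms(1) unfolding standing_mms_def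
    by (intro sigma_finite_measure_locally_finite) (blast, meson centre_in_ball open_ball)
  note bound = ess_sup_far_kernel_le_tail_integral[OF sets this]
  show ?thesis
    unfolding p_decay_def
    by (rule tendsto_Limsup_at_right_0_dominated[where c = 2 and K = "2 * ennreal (2 powr (p + 1))"
        and G = "\<lambda>s \<delta>. \<integral>\<^sup>+ t\<in>{s<..}. \<rho>p \<delta> t / ennreal (t powr (p + 1)) \<partial>lebesgue"])
      (use assms(3,6,7) const in \<open>auto intro!: bound[OF _ _ b] simp: ennreal_mult_less_top\<close>)
qed

end
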